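(* Let $t\geq 2$ be an integer, and let $\delta$ and $\alpha$ be nonnegative integers. Assume that every $K_{t+1}$-minor-free graph has minimum degree at most $\delta$, and that every $K_t$-minor-free graph with exactly $\delta$ vertices has an independent set of size $\alpha$. Then every $K_{t+1}$-minor-free graph is $(\delta-\alpha+2)$-colourable.
   Context: All graphs are finite and simple. A graph is $K_s$-minor-free if it does not contain the complete graph $K_s$ as a minor. A graph is $k$-colourable if it has a proper vertex colouring with at most $k$ colours. *)

theory Defs
  imports Main
begin

definition graph :: "'a set \<Rightarrow> ('a \<Rightarrow> 'a \<Rightarrow> bool) \<Rightarrow> bool" where
  "graph V E \<longleftrightarrow> finite V \<and> (\<forall>u v. E u v \<longrightarrow> E v u) \<and> (\<forall>v. \<not> E v v)
     \<and> (\<forall>u v. E u v \<longrightarrow> u \<in> V \<and> v \<in> V)"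

definition connected_in :: "('a \<Rightarrow> 'a \<Rightarrow> bool) \<Rightarrow> 'a set \<Rightarrow> bool" where
  "connected_in E S \<longleftrightarrow> (\<forall>x\<in>S. \<forall>y\<in>S. (\<lambda>a b. a \<in> S \<and> b \<in> S \<and> E a b)\<^sup>*\<^sup>* x y)"

definition has_K_minor :: "'a set \<Rightarrow> ('a \<Rightarrow> 'a \<Rightarrow> bool) \<Rightarrow> nat \<Rightarrow> bool" where
  "has_K_minor V E s \<longleftrightarrow> (\<exists>B :: nat \<Rightarrow> 'a set.
     (\<forall>i<s. B i \<noteq> {} \<and> B i \<subseteq> V \<and> connected_in E (B i))
     \<and> (\<forall>i<s. \<forall>j<s. i \<noteq> j \<longrightarrow> B i \<inter> B j = {})
     \<and> (\<forall>i<s. \<forall>j<s. i \<noteq> j \<longrightarrow> (\<exists>x\<in>B i. \<exists>y\<in>B j. E x y)))"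

definition K_minor_free :: "'a set \<Rightarrow> ('a \<Rightarrow> 'a \<Rightarrow> bool) \<Rightarrow> nat \<Rightarrow> bool" where
  "K_minor_free V E s \<longleftrightarrow> \<not> has_K_minor V E s"

definition degree :: "'a set \<Rightarrow> ('a \<Rightarrow> 'a \<Rightarrow> bool) \<Rightarrow> 'a \<Rightarrow> nat" where
  "degree V E v = card {u \<in> V. E v u}"

definition min_degree_le :: "'a set \<Rightarrow> ('a \<Rightarrow> 'a \<Rightarrow> bool) \<Rightarrow> nat \<Rightarrow> bool" where
  "min_degree_le V E d \<longleftrightarrow> (\<exists>v\<in>V. degree V E v \<le> d)"

definition independent_set :: "'a set \<Rightarrow> ('a \<Rightarrow> 'a \<Rightarrow> bool) \<Rightarrow> 'a set \<Rightarrow> bool" where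
  "independent_set V E S \<longleftrightarrow> S \<subseteq> V \<and> (\<forall>x\<in>S. \<forall>y\<in>S. \<not> E x y)"

definition colourable :: "'a set \<Rightarrow> ('a \<Rightarrow> 'a \<Rightarrow> bool) \<Rightarrow> nat \<Rightarrow> bool" where
  "colourable V E k \<longleftrightarrow> (\<exists>c :: 'a \<Rightarrow> nat. (\<forall>v\<in>V. c v < k)
     \<and> (\<forall>u\<in>V. \<forall>v\<in>V. E u v \<longrightarrow> c u \<noteq> c v))"

end

theory Submission
  imports Defs
begin

text \<open>Induction on the number of vertices, with \<open>k = \<delta> - \<alpha> + 2\<close> colours. A vertex \<open>v\<close> of
minimum degree either has fewer than \<open>k\<close> neighbours, and a colouring of the graph without
\<open>v\<close> extends to \<open>v\<close>; or its neighbourhood \<open>N\<close> is \<open>K\<^sub>t\<close>-minor-free (with \<open>v\<close> as apex a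
\<open>K\<^sub>t\<close> minor in \<open>N\<close> would give a \<open>K\<^sub>t\<^sub>+\<^sub>1\<close> minor) and has at most \<open>\<delta>\<close> vertices, so it
contains an independent set \<open>I\<close> with at most \<open>\<delta> - \<alpha>\<close> neighbours of \<open>v\<close> outside it.
Contracting the star from \<open>v\<close> to \<open>I\<close> keeps the graph \<open>K\<^sub>t\<^sub>+\<^sub>1\<close>-minor-free; in a colouring
of the contraction all of \<open>I\<close> can take the colour of the contracted vertex, and \<open>v\<close> then
sees at most \<open>\<delta> - \<alpha> + 1\<close> colours.\<close>

definition induced :: "'a set \<Rightarrow> ('a \<Rightarrow> 'a \<Rightarrow> bool) \<Rightarrow> 'a \<Rightarrow> 'a \<Rightarrow> bool" where
  "induced S E a b \<longleftrightarrow> a \<in> S \<and> b \<in> S \<and> E a b"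

definition neighbours :: "'a set \<Rightarrow> ('a \<Rightarrow> 'a \<Rightarrow> bool) \<Rightarrow> 'a \<Rightarrow> 'a set" where
  "neighbours V E v = {u \<in> V. E v u}"

lemma graph_finite: "graph V E \<Longrightarrow> finite V"
  by (simp add: graph_def)

lemma graph_sym: "graph V E \<Longrightarrow> E u v \<longleftrightarrow> E v u"
  unfolding graph_def by blast

lemma graph_irrefl: "graph V E \<Longrightarrow> \<not> E v v"
  by (simp add: graph_def)

lemma finite_neighbours: "graph V E \<Longrightarrow> finite (neighbours V E v)"
  by (simp add: graph_def neighbours_def)

lemma not_in_neighbours_self: "graph V E \<Longrightarrow> v \<notin> neighbours V E v"
  by (simp add: graph_def neighbours_def)

lemma degree_eq_card_neighbours: "degree V E v = card (neighbours V E v)"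
  by (simp add: degree_def neighbours_def)

lemma connected_in_iff_rtranclp_induced:
  "connected_in E S \<longleftrightarrow> (\<forall>x\<in>S. \<forall>y\<in>S. (induced S E)\<^sup>*\<^sup>* x y)"
  by (simp add: connected_in_def induced_def[abs_def])

lemma graph_pullback:
  assumes "graph V E" "finite W" "S \<subseteq> W"
  shows "graph W (induced S (\<lambda>x y. E (g x) (g y)))"
  using assms by (auto simp: graph_def induced_def)

lemma graph_induced: "graph V E \<Longrightarrow> S \<subseteq> V \<Longrightarrow> graph S (induced S E)"
  using graph_pullback[of V E S S "\<lambda>x. x"] graph_finite finite_subset by fastforce

lemma connected_in_mono:
  assumes "connected_in E S" "\<And>a b. a \<in> S \<Longrightarrow> b \<in> S \<Longrightarrow> E a b \<Longrightarrow> E' a b"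
  shows "connected_in E' S"
proof -
  have "induced S E \<le> induced S E'"
    using assms(2) by (auto simp: induced_def)
  then show ?thesis
    using assms(1) rtranclp_mono unfolding connected_in_iff_rtranclp_induced by blast
qed

lemma connected_in_singleton: "connected_in E {x}"
  by (simp add: connected_in_def)

lemma connected_in_insert_star:
  assumes "\<And>i. i \<in> I \<Longrightarrow> E v i \<and> E i v"
  shows "connected_in E (insert v I)"
proof -
  let ?R = "induced (insert v I) E"
  have "?R\<^sup>*\<^sup>* a v" "?R\<^sup>*\<^sup>* v a" if "a \<in> insert v I" for a
    using that assms by (auto simp: induced_def intro: r_into_rtranclp)
  then show ?thesis
    unfolding connected_in_iff_rtranclp_induced by (meson rtranclp_trans)
qed

lemma rtranclp_induced_if_connected_in:
  assumes "connected_in E S" "S \<subseteq> T" "x \<in> S" "y \<in> S"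
  shows "(induced T E)\<^sup>*\<^sup>* x y"
proof -
  have "induced S E \<le> induced T E"
    using assms(2) by (auto simp: induced_def)
  then show ?thesis
    using assms(1,3,4) rtranclp_mono unfolding connected_in_iff_rtranclp_induced by blast
qed

subsection \<open>Minor maps\<close>

text \<open>\<open>\<phi>\<close> exhibits \<open>(V', E')\<close> as a minor of \<open>(V, E)\<close>: the vertex \<open>x\<close> of the
minor is obtained by contracting the branch set \<open>\<phi> x\<close>.\<close>
definition minor_map ::
  "'b set \<Rightarrow> ('b \<Rightarrow> 'b \<Rightarrow> bool) \<Rightarrow> 'a set \<Rightarrow> ('a \<Rightarrow> 'a \<Rightarrow> bool) \<Rightarrow> ('b \<Rightarrow> 'a set) \<Rightarrow> bool" where
  "minor_map V' E' V E \<phi> \<longleftrightarrow>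
     (\<forall>x\<in>V'. \<phi> x \<noteq> {} \<and> \<phi> x \<subseteq> V \<and> connected_in E (\<phi> x))
     \<and> (\<forall>x\<in>V'. \<forall>y\<in>V'. x \<noteq> y \<longrightarrow> \<phi> x \<inter> \<phi> y = {})
     \<and> (\<forall>x y. E' x y \<longrightarrow> x \<in> V' \<and> y \<in> V' \<and> (\<exists>a\<in>\<phi> x. \<exists>b\<in>\<phi> y. E a b))"

lemma connected_in_UN_branch_sets:
  assumes \<phi>: "minor_map V' E' V E \<phi>" and B: "B \<subseteq> V'" "connected_in E' B"
  shows "connected_in E (\<Union> (\<phi> ` B))"
proof -
  let ?Q = "induced (\<Union> (\<phi> ` B)) E"
  have inner: "?Q\<^sup>*\<^sup>* a b" if "x \<in> B" "a \<in> \<phi> x" "b \<in> \<phi> x" for x a b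
    using rtranclp_induced_if_connected_in[of E "\<phi> x" "\<Union> (\<phi> ` B)"] \<phi> B that
    unfolding minor_map_def by blast
  have path: "?Q\<^sup>*\<^sup>* a b"
    if "(induced B E')\<^sup>*\<^sup>* x y" "x \<in> B" "a \<in> \<phi> x" "b \<in> \<phi> y" for x y a b
    using that(1,4)
  proof (induction arbitrary: b rule: rtranclp_induct)
    case base
    then show ?case using inner that(2,3) by blast
  next
    case (step y z)
    then have "y \<in> B" "z \<in> B" "E' y z" by (auto simp: induced_def)
    then obtain a' b' where "a' \<in> \<phi> y" "b' \<in> \<phi> z" "E a' b'"
      using \<phi> unfolding minor_map_def by blast
    have "?Q\<^sup>*\<^sup>* a a'" using step.IH \<open>a' \<in> \<phi> y\<close> .
    moreover have "?Q a' b'"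
      using \<open>y \<in> B\<close> \<open>z \<in> B\<close> \<open>a' \<in> \<phi> y\<close> \<open>b' \<in> \<phi> z\<close> \<open>E a' b'\<close>
      by (auto simp: induced_def)
    moreover have "?Q\<^sup>*\<^sup>* b' b" using inner \<open>z \<in> B\<close> \<open>b' \<in> \<phi> z\<close> step.prems by blast
    ultimately show ?case by (meson rtranclp.rtrancl_into_rtrancl rtranclp_trans)
  qed
  show ?thesis
    using B(2) path unfolding connected_in_iff_rtranclp_induced by blast
qed

lemma has_K_minor_minor_map:
  assumes \<phi>: "minor_map V' E' V E \<phi>" and "has_K_minor V' E' s"
  shows "has_K_minor V E s"
proof -
  obtain B where B: "\<forall>i<s. B i \<noteq> {} \<and> B i \<subseteq> V' \<and> connected_in E' (B i)"
    "\<forall>i<s. \<forall>j<s. i \<noteq> j \<longrightarrow> B i \<inter> B j = {}"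
    "\<forall>i<s. \<forall>j<s. i \<noteq> j \<longrightarrow> (\<exists>x\<in>B i. \<exists>y\<in>B j. E' x y)"
    using assms(2) unfolding has_K_minor_def by blast
  have \<phi>_branch: "\<phi> x \<noteq> {}" "\<phi> x \<subseteq> V" if "x \<in> V'" for x
    using \<phi> that unfolding minor_map_def by auto
  have \<phi>_disjoint: "\<phi> x \<inter> \<phi> y = {}" if "x \<in> V'" "y \<in> V'" "x \<noteq> y" for x y
    using \<phi> that unfolding minor_map_def by auto
  have \<phi>_edge: "\<exists>a\<in>\<phi> x. \<exists>b\<in>\<phi> y. E a b" if "E' x y" for x y
    using \<phi> that unfolding minor_map_def by auto
  show ?thesis unfolding has_K_minor_def
  proof (intro exI[of _ "\<lambda>i. \<Union> (\<phi> ` B i)"] conjI allI impI)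
    fix i assume "i < s"
    then obtain x where "x \<in> B i" and BV': "B i \<subseteq> V'" and "connected_in E' (B i)"
      using B(1) by blast
    then obtain a where "a \<in> \<phi> x" using \<phi>_branch(1) by blast
    then show "\<Union> (\<phi> ` B i) \<noteq> {}" using \<open>x \<in> B i\<close> by blast
    show "\<Union> (\<phi> ` B i) \<subseteq> V" using \<phi>_branch(2) BV' by auto
    show "connected_in E (\<Union> (\<phi> ` B i))"
      by (rule connected_in_UN_branch_sets[OF \<phi> BV']) fact
  next
    fix i j assume ij: "i < s" "j < s" "i \<noteq> j"
    show "\<Union> (\<phi> ` B i) \<inter> \<Union> (\<phi> ` B j) = {}"
    proof (rule ccontr)
      assume "\<Union> (\<phi> ` B i) \<inter> \<Union> (\<phi> ` B j) \<noteq> {}"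
      then obtain a where "a \<in> \<Union> (\<phi> ` B i)" "a \<in> \<Union> (\<phi> ` B j)" by blast
      then obtain x y where "x \<in> B i" "a \<in> \<phi> x" "y \<in> B j" "a \<in> \<phi> y" by blast
      moreover have "B i \<inter> B j = {}" "B i \<subseteq> V'" "B j \<subseteq> V'" using B(1,2) ij by blast+
      ultimately have "x \<in> V'" "y \<in> V'" "x \<noteq> y" by blast+
      then have "\<phi> x \<inter> \<phi> y = {}" by (rule \<phi>_disjoint)
      then show False using \<open>a \<in> \<phi> x\<close> \<open>a \<in> \<phi> y\<close> by blast
    qed
    obtain x y where "x \<in> B i" "y \<in> B j" "E' x y" using B(3) ij by blast
    moreover obtain a b where "a \<in> \<phi> x" "b \<in> \<phi> y" "E a b" using \<phi>_edge[OF \<open>E' x y\<close>] by blast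
    ultimately show "\<exists>a\<in>\<Union> (\<phi> ` B i). \<exists>b\<in>\<Union> (\<phi> ` B j). E a b" by blast
  qed
qed

lemma K_minor_free_minor_map:
  "minor_map V' E' V E \<phi> \<Longrightarrow> K_minor_free V E s \<Longrightarrow> K_minor_free V' E' s"
  using has_K_minor_minor_map unfolding K_minor_free_def by blast

lemma minor_map_pullback:
  assumes "inj_on g W" "g ` W \<subseteq> V"
  shows "minor_map W (induced W (\<lambda>x y. E (g x) (g y))) V E (\<lambda>x. {g x})"
  using assms by (auto simp: minor_map_def induced_def inj_on_def connected_in_singleton)

lemma K_minor_free_induced:
  "S \<subseteq> V \<Longrightarrow> K_minor_free V E s \<Longrightarrow> K_minor_free S (induced S E) s"
  using K_minor_free_minor_map minor_map_pullback[of "\<lambda>x. x" S V E] by auto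

lemma has_K_minor_apex:
  assumes "has_K_minor N (induced N E) t" "v \<in> V" "v \<notin> N" "N \<subseteq> V"
    and "\<And>x. x \<in> N \<Longrightarrow> E x v \<and> E v x"
  shows "has_K_minor V E (Suc t)"
proof -
  obtain B where B: "\<forall>i<t. B i \<noteq> {} \<and> B i \<subseteq> N \<and> connected_in (induced N E) (B i)"
    "\<forall>i<t. \<forall>j<t. i \<noteq> j \<longrightarrow> B i \<inter> B j = {}"
    "\<forall>i<t. \<forall>j<t. i \<noteq> j \<longrightarrow> (\<exists>x\<in>B i. \<exists>y\<in>B j. induced N E x y)"
    using assms(1) unfolding has_K_minor_def by blast
  have connected: "connected_in E (B i)" if "i < t" for i
    using B(1) that connected_in_mono[of "induced N E" "B i" E] by (auto simp: induced_def)
  have apex_edge: "\<exists>x\<in>B i. E x v \<and> E v x" if "i < t" for i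
    using B(1) that assms(5) by blast
  define B' where "B' = B(t := {v})"
  have branch: "B' i \<noteq> {} \<and> B' i \<subseteq> V \<and> connected_in E (B' i)" if "i < Suc t" for i
  proof (cases "i = t")
    case True
    then show ?thesis using assms(2) connected_in_singleton by (simp add: B'_def)
  next
    case False
    then show ?thesis
      using B(1) connected assms(4) \<open>i < Suc t\<close> by (auto simp: B'_def less_Suc_eq)
  qed
  have joined: "B' i \<inter> B' j = {} \<and> (\<exists>x\<in>B' i. \<exists>y\<in>B' j. E x y) \<and> (\<exists>x\<in>B' j. \<exists>y\<in>B' i. E x y)"
    if "i < t" "j < Suc t" "i \<noteq> j" for i j
  proof (cases "j = t")
    case True
    then show ?thesis using B(1) assms(3) apex_edge[of i] \<open>i < t\<close> by (auto simp: B'_def)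
  next
    case False
    then have "j < t" "i \<noteq> t" using that by auto
    then show ?thesis
      using B(2,3) that by (simp add: B'_def induced_def) blast
  qed
  show ?thesis
    unfolding has_K_minor_def
  proof (intro exI[of _ B'] conjI allI impI)
    fix i assume "i < Suc t"
    then show "B' i \<noteq> {}" "B' i \<subseteq> V" "connected_in E (B' i)" using branch by blast+
  next
    fix i j assume "i < Suc t" "j < Suc t" "i \<noteq> j"
    then have "B' i \<inter> B' j = {} \<and> (\<exists>x\<in>B' i. \<exists>y\<in>B' j. E x y)"
      using joined[of i j] joined[of j i] by (auto simp: less_Suc_eq Int_commute)
    then show "B' i \<inter> B' j = {}" "\<exists>x\<in>B' i. \<exists>y\<in>B' j. E x y" by blast+
  qed
qed

lemma K_minor_free_neighbours:
  assumes G: "graph V E" and "v \<in> V" and free: "K_minor_free V E (Suc t)"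
  shows "K_minor_free (neighbours V E v) (induced (neighbours V E v) E) t"
  unfolding K_minor_free_def
proof
  assume "has_K_minor (neighbours V E v) (induced (neighbours V E v) E) t"
  then have "has_K_minor V E (Suc t)"
    by (rule has_K_minor_apex[OF _ \<open>v \<in> V\<close> not_in_neighbours_self[OF G]])
      (auto simp: neighbours_def graph_sym[OF G])
  then show False using free unfolding K_minor_free_def by blast
qed

lemma has_K_minor_within_edge_support:
  assumes "t \<ge> 2" "\<And>x y. F x y \<Longrightarrow> x \<in> U \<and> y \<in> U" "has_K_minor W F t"
  shows "has_K_minor U F t"
proof -
  obtain B where B: "\<forall>i<t. B i \<noteq> {} \<and> B i \<subseteq> W \<and> connected_in F (B i)"
    "\<forall>i<t. \<forall>j<t. i \<noteq> j \<longrightarrow> B i \<inter> B j = {}"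
    "\<forall>i<t. \<forall>j<t. i \<noteq> j \<longrightarrow> (\<exists>x\<in>B i. \<exists>y\<in>B j. F x y)"
    using assms(3) unfolding has_K_minor_def by blast
  have BU: "B i \<subseteq> U" if "i < t" for i
  proof
    fix p assume "p \<in> B i"
    have "\<exists>j<t. j \<noteq> i"
      using assms(1) by (intro exI[of _ "if i = 0 then 1 else 0"]) auto
    then obtain j where "j < t" "j \<noteq> i" by blast
    then obtain x y where "x \<in> B i" "F x y" using B(3) \<open>i < t\<close> by blast
    have "(induced (B i) F)\<^sup>*\<^sup>* p x"
      using B(1) \<open>i < t\<close> \<open>p \<in> B i\<close> \<open>x \<in> B i\<close>
      unfolding connected_in_iff_rtranclp_induced by blast
    then show "p \<in> U"
      by (cases rule: converse_rtranclpE) (use \<open>F x y\<close> assms(2) in \<open>auto simp: induced_def\<close>)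
  qed
  show ?thesis
    unfolding has_K_minor_def by (rule exI[of _ B]) (use B BU in blast)
qed

subsection \<open>Transfer from graphs on the natural numbers\<close>

lemma min_degree_le_of_nat_graphs:
  assumes nat_graphs: "\<And>(W :: nat set) F. graph W F \<Longrightarrow> W \<noteq> {} \<Longrightarrow> K_minor_free W F s
      \<Longrightarrow> min_degree_le W F \<delta>"
    and G: "graph V E" and "V \<noteq> {}" and free: "K_minor_free V E s"
  shows "min_degree_le V E \<delta>"
proof -
  define W where "W = {0..<card V}"
  obtain g where g: "bij_betw g W V"
    using ex_bij_betw_nat_finite[OF graph_finite[OF G]] unfolding W_def by blast
  have g_inj: "inj_on g W" and g_onto: "g ` W = V" using g by (auto simp: bij_betw_def)
  define F where "F = induced W (\<lambda>x y. E (g x) (g y))"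
  have "minor_map W F V E (\<lambda>x. {g x})"
    unfolding F_def using g_inj g_onto by (intro minor_map_pullback) auto
  then have "K_minor_free W F s" using K_minor_free_minor_map free by blast
  moreover have "graph W F" unfolding F_def by (rule graph_pullback[OF G]) (simp_all add: W_def)
  moreover have "W \<noteq> {}" using \<open>V \<noteq> {}\<close> g_onto by blast
  ultimately obtain x where "x \<in> W" "degree W F x \<le> \<delta>"
    using nat_graphs unfolding min_degree_le_def by blast
  have "neighbours V E (g x) = g ` neighbours W F x"
    using \<open>x \<in> W\<close> g_onto by (auto simp: neighbours_def F_def induced_def)
  then have "degree V E (g x) = degree W F x"
    unfolding degree_eq_card_neighbours
    by (simp add: card_image inj_on_subset[OF g_inj] neighbours_def)
  then show ?thesis
    using \<open>x \<in> W\<close> \<open>degree W F x \<le> \<delta>\<close> g_onto unfolding min_degree_le_def by (metis imageI)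
qed

text \<open>Pad \<open>N\<close> with isolated vertices to exactly \<open>\<delta>\<close> vertices: since \<open>t \<ge> 2\<close> these create
no \<open>K\<^sub>t\<close> minor, and at most \<open>\<delta> - card N\<close> vertices of an independent set lie among them.\<close>
lemma ex_large_independent_subset_of_nat_graphs:
  assumes "t \<ge> 2"
    and nat_graphs: "\<And>(W :: nat set) F. graph W F \<Longrightarrow> K_minor_free W F t \<Longrightarrow> card W = \<delta>
      \<Longrightarrow> \<exists>S. independent_set W F S \<and> card S = \<alpha>"
    and G: "graph N EN" and free: "K_minor_free N EN t" and small: "card N \<le> \<delta>"
  shows "\<exists>I. independent_set N EN I \<and> \<alpha> + card N \<le> card I + \<delta>"
proof -
  define d where "d = card N"
  obtain h where h: "bij_betw h {0..<d} N"
    using ex_bij_betw_nat_finite[OF graph_finite[OF G]] unfolding d_def by blast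
  then have h_inj: "inj_on h {0..<d}" and h_onto: "h ` {0..<d} = N" by (auto simp: bij_betw_def)
  define F where "F = induced {0..<d} (\<lambda>x y. EN (h x) (h y))"
  have "graph {0..<\<delta>} F"
    unfolding F_def by (rule graph_pullback[OF G]) (use small in \<open>auto simp: d_def\<close>)
  moreover have "K_minor_free {0..<\<delta>} F t"
  proof -
    have "minor_map {0..<d} F N EN (\<lambda>x. {h x})"
      unfolding F_def using h_inj h_onto by (intro minor_map_pullback) auto
    then have "K_minor_free {0..<d} F t" using K_minor_free_minor_map free by blast
    moreover have "F x y \<Longrightarrow> x \<in> {0..<d} \<and> y \<in> {0..<d}" for x y
      by (simp add: F_def induced_def)
    ultimately show ?thesis
      using has_K_minor_within_edge_support[OF \<open>t \<ge> 2\<close>] unfolding K_minor_free_def by blast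
  qed
  ultimately obtain S where S: "independent_set {0..<\<delta>} F S" "card S = \<alpha>"
    using nat_graphs[of "{0..<\<delta>}" F] by auto
  define I where "I = h ` (S \<inter> {0..<d})"
  have "independent_set N EN I"
    using S(1) h_onto unfolding independent_set_def I_def F_def induced_def by auto
  have "card I = card (S \<inter> {0..<d})"
    unfolding I_def by (rule card_image) (rule inj_on_subset[OF h_inj], blast)
  have "\<alpha> \<le> card ((S \<inter> {0..<d}) \<union> {d..<\<delta>})"
    unfolding S(2)[symmetric] using S(1) by (intro card_mono) (auto simp: independent_set_def)
  also have "\<dots> \<le> card (S \<inter> {0..<d}) + card {d..<\<delta>}"
    by (rule card_Un_le)
  finally have "\<alpha> + d \<le> card I + \<delta>"
    using \<open>card I = card (S \<inter> {0..<d})\<close> small unfolding d_def by simp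
  then show ?thesis
    using \<open>independent_set N EN I\<close> unfolding d_def by blast
qed

subsection \<open>Extending colourings\<close>

lemma ex_less_notin_image:
  assumes "finite A" "card A < (k :: nat)"
  shows "\<exists>x<k. x \<notin> f ` A"
proof (rule ccontr)
  assume "\<not> (\<exists>x<k. x \<notin> f ` A)"
  then have "{..<k} \<subseteq> f ` A" by auto
  then have "k \<le> card (f ` A)" using card_mono[of "f ` A" "{..<k}"] assms(1) by simp
  then show False using card_image_le[OF assms(1), of f] assms(2) by linarith
qed

lemma colourable_of_colourable_delete:
  assumes G: "graph V E"
    and col: "colourable (V - {v}) (induced (V - {v}) E) k"
    and deg: "degree V E v < k"
  shows "colourable V E k"
proof -
  obtain c where c: "\<forall>w\<in>V - {v}. c w < k"
    "\<forall>a\<in>V - {v}. \<forall>b\<in>V - {v}. induced (V - {v}) E a b \<longrightarrow> c a \<noteq> c b"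
    using col unfolding colourable_def by blast
  obtain x where "x < k" "x \<notin> c ` neighbours V E v"
    using ex_less_notin_image[OF finite_neighbours[OF G], where f = c] deg
    unfolding degree_eq_card_neighbours by blast
  then show ?thesis
    unfolding colourable_def using c G
    by (intro exI[of _ "c(v := x)"])
      (auto simp: neighbours_def induced_def graph_irrefl[OF G] graph_sym[OF G])
qed

text \<open>The star from \<open>v\<close> to \<open>I\<close> contracted onto \<open>v\<close>.\<close>
definition contract :: "'a set \<Rightarrow> ('a \<Rightarrow> 'a \<Rightarrow> bool) \<Rightarrow> 'a \<Rightarrow> 'a set \<Rightarrow> 'a \<Rightarrow> 'a \<Rightarrow> bool" where
  "contract V E v I a b \<longleftrightarrow> a \<in> V - I \<and> b \<in> V - I \<and> a \<noteq> b \<and>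
     (E a b \<or> (a = v \<and> (\<exists>i\<in>I. E i b)) \<or> (b = v \<and> (\<exists>i\<in>I. E a i)))"

lemma graph_contract:
  assumes "graph V E"
  shows "graph (V - I) (contract V E v I)"
  using assms graph_sym[OF assms] unfolding graph_def contract_def by auto

lemma K_minor_free_contract:
  assumes G: "graph V E" and "v \<in> V" "I \<subseteq> neighbours V E v"
    and free: "K_minor_free V E s"
  shows "K_minor_free (V - I) (contract V E v I) s"
proof -
  have "v \<notin> I" using not_in_neighbours_self[OF G] \<open>I \<subseteq> neighbours V E v\<close> by blast
  define \<phi> where "\<phi> a = (if a = v then insert v I else {a})" for a
  have "connected_in E (insert v I)"
    using G \<open>I \<subseteq> neighbours V E v\<close>
    by (intro connected_in_insert_star) (auto simp: neighbours_def graph_sym[OF G])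
  have "\<phi> a \<noteq> {} \<and> \<phi> a \<subseteq> V \<and> connected_in E (\<phi> a)" if "a \<in> V - I" for a
    using that \<open>v \<in> V\<close> \<open>I \<subseteq> neighbours V E v\<close> \<open>connected_in E (insert v I)\<close>
      connected_in_singleton
    by (auto simp: \<phi>_def neighbours_def)
  moreover have "\<phi> a \<inter> \<phi> b = {}" if "a \<in> V - I" "b \<in> V - I" "a \<noteq> b" for a b
    using that by (auto simp: \<phi>_def)
  moreover have "a \<in> V - I \<and> b \<in> V - I \<and> (\<exists>x\<in>\<phi> a. \<exists>y\<in>\<phi> b. E x y)"
    if "contract V E v I a b" for a b
    using that unfolding contract_def \<phi>_def by auto
  ultimately have "minor_map (V - I) (contract V E v I) V E \<phi>"
    unfolding minor_map_def by blast
  then show ?thesis using K_minor_free_minor_map free by blast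
qed

lemma colourable_of_colourable_contract:
  assumes G: "graph V E" and "v \<in> V" and "I \<subseteq> neighbours V E v"
    and indep: "independent_set V E I"
    and col: "colourable (V - I) (contract V E v I) k"
    and bound: "card (neighbours V E v - I) + 1 < k"
  shows "colourable V E k"
proof -
  have fin: "finite (neighbours V E v)" using G by (rule finite_neighbours)
  have irrefl: "\<not> E a a" and sym: "E a b \<longleftrightarrow> E b a" for a b
    using graph_irrefl[OF G] graph_sym[OF G] by blast+
  have "v \<notin> I" using not_in_neighbours_self[OF G] \<open>I \<subseteq> neighbours V E v\<close> by blast
  obtain c where c: "\<forall>w\<in>V - I. c w < k"
    "\<forall>a\<in>V - I. \<forall>b\<in>V - I. contract V E v I a b \<longrightarrow> c a \<noteq> c b"
    using col unfolding colourable_def by blast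
  have "card (insert v (neighbours V E v - I)) < k"
    using fin bound by (auto simp: card_insert_if)
  then obtain x where "x < k" and x_fresh: "x \<notin> c ` insert v (neighbours V E v - I)"
    using ex_less_notin_image[OF _ \<open>card (insert v (neighbours V E v - I)) < k\<close>, where f = c] fin by blast
  define c' where "c' a = (if a = v then x else if a \<in> I then c v else c a)" for a
  have "c' a \<noteq> c' b" if "a \<in> V" "b \<in> V" "E a b" "a \<noteq> v" for a b
  proof -
    have "b \<noteq> a" using \<open>E a b\<close> irrefl by blast
    consider "b = v" | "a \<in> I" "b \<in> I" | "b \<noteq> v" "a \<in> I" "b \<notin> I"
      | "a \<notin> I" "b \<in> I" | "b \<noteq> v" "a \<notin> I" "b \<notin> I" by blast
    then show ?thesis
    proof cases
      case 1
      then have "a \<in> neighbours V E v" using that sym[of a b] by (simp add: neighbours_def)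
      then show ?thesis using 1 x_fresh \<open>a \<noteq> v\<close> by (auto simp: c'_def)
    next
      case 2
      then show ?thesis using indep \<open>E a b\<close> by (auto simp: independent_set_def)
    next
      case 3
      then have "contract V E v I v b"
        using that \<open>v \<in> V\<close> \<open>v \<notin> I\<close> unfolding contract_def by blast
      then show ?thesis using c(2) 3 that \<open>v \<in> V\<close> \<open>v \<notin> I\<close> by (auto simp: c'_def)
    next
      case 4
      then have "contract V E v I a v"
        using that \<open>v \<in> V\<close> \<open>v \<notin> I\<close> unfolding contract_def by blast
      then show ?thesis using c(2) 4 that \<open>v \<in> V\<close> \<open>v \<notin> I\<close> by (auto simp: c'_def)
    next
      case 5
      then have "contract V E v I a b" using that \<open>b \<noteq> a\<close> by (simp add: contract_def)
      then show ?thesis using c(2) 5 that by (auto simp: c'_def)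
    qed
  qed
  then have "c' a \<noteq> c' b" if "a \<in> V" "b \<in> V" "E a b" for a b
    using that sym[of a b] irrefl[of a] by metis
  moreover have "c' w < k" if "w \<in> V" for w
    using that c(1) \<open>x < k\<close> \<open>v \<in> V\<close> \<open>v \<notin> I\<close> by (auto simp: c'_def)
  ultimately show ?thesis unfolding colourable_def by blast
qed

lemma ex_independent_neighbours_to_contract:
  fixes V :: "'a set"
  assumes independent: "\<And>(N :: 'a set) F. graph N F \<Longrightarrow> K_minor_free N F t \<Longrightarrow> card N \<le> \<delta>
      \<Longrightarrow> \<exists>I. independent_set N F I \<and> \<alpha> + card N \<le> card I + \<delta>"
    and G: "graph V E" and "v \<in> V" and free: "K_minor_free V E (Suc t)"
    and "card (neighbours V E v) \<le> \<delta>" and "\<not> card (neighbours V E v) < \<delta> - \<alpha> + 2"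
  shows "\<exists>I. I \<noteq> {} \<and> I \<subseteq> neighbours V E v \<and> independent_set V E I
    \<and> card (neighbours V E v - I) + 1 < \<delta> - \<alpha> + 2"
proof -
  define N where "N = neighbours V E v"
  have "N \<subseteq> V" by (simp add: N_def neighbours_def)
  have "\<exists>I. independent_set N (induced N E) I \<and> \<alpha> + card N \<le> card I + \<delta>"
  proof (rule independent)
    show "graph N (induced N E)" using G \<open>N \<subseteq> V\<close> by (rule graph_induced)
    show "K_minor_free N (induced N E) t"
      unfolding N_def using G \<open>v \<in> V\<close> free by (rule K_minor_free_neighbours)
    show "card N \<le> \<delta>" using assms(5) by (simp add: N_def)
  qed
  then obtain I where I: "independent_set N (induced N E) I" "\<alpha> + card N \<le> card I + \<delta>"
    by blast
  then have "I \<subseteq> N" "independent_set V E I"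
    using \<open>N \<subseteq> V\<close> unfolding independent_set_def induced_def by blast+
  moreover have "card (N - I) = card N - card I" "card I \<le> card N"
    using finite_neighbours[OF G] \<open>I \<subseteq> N\<close> unfolding N_def
    by (auto simp: card_Diff_subset finite_subset card_mono)
  then have "card (N - I) + 1 < \<delta> - \<alpha> + 2" "card I > 0"
    using assms(6) I(2) unfolding N_def by linarith+
  ultimately show ?thesis unfolding N_def by (intro exI[of _ I]) auto
qed

lemma K_minor_free_colourable:
  fixes V :: "'a set"
  assumes min_degree: "\<And>(W :: 'a set) F. graph W F \<Longrightarrow> W \<noteq> {} \<Longrightarrow> K_minor_free W F (Suc t)
      \<Longrightarrow> min_degree_le W F \<delta>"
    and independent: "\<And>(N :: 'a set) F. graph N F \<Longrightarrow> K_minor_free N F t \<Longrightarrow> card N \<le> \<delta>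
      \<Longrightarrow> \<exists>I. independent_set N F I \<and> \<alpha> + card N \<le> card I + \<delta>"
    and "graph V E" "K_minor_free V E (Suc t)"
  shows "colourable V E (\<delta> - \<alpha> + 2)"
  using assms(3,4)
proof (induction "card V" arbitrary: V E rule: less_induct)
  case less
  note G = less.prems(1) and free = less.prems(2)
  define k where "k = \<delta> - \<alpha> + 2"
  show ?case
  proof (cases "V = {}")
    case True
    then show ?thesis by (simp add: colourable_def)
  next
    case False
    then obtain v where "v \<in> V" "degree V E v \<le> \<delta>"
      using min_degree G free unfolding min_degree_le_def by blast
    define N where "N = neighbours V E v"
    have "finite V" using G by (rule graph_finite)
    have "N \<subseteq> V" by (simp add: N_def neighbours_def)
    show ?thesis
    proof (cases "card N < k")
      case True
      have "colourable (V - {v}) (induced (V - {v}) E) k"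
        unfolding k_def
      proof (rule less.hyps)
        show "card (V - {v}) < card V" using \<open>finite V\<close> \<open>v \<in> V\<close> by (rule card_Diff1_less)
        show "graph (V - {v}) (induced (V - {v}) E)" using G by (rule graph_induced) blast
        show "K_minor_free (V - {v}) (induced (V - {v}) E) (Suc t)"
          using K_minor_free_induced[OF _ free] by blast
      qed
      then show ?thesis
        using colourable_of_colourable_delete[OF G] True
        unfolding k_def N_def degree_eq_card_neighbours by blast
    next
      case False
      then obtain I where "I \<noteq> {}" "I \<subseteq> N" "independent_set V E I" "card (N - I) + 1 < k"
        using ex_independent_neighbours_to_contract[OF independent G \<open>v \<in> V\<close> free
            \<open>degree V E v \<le> \<delta>\<close>[unfolded degree_eq_card_neighbours] False[unfolded N_def k_def]]
        unfolding k_def N_def by blast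
      have "colourable (V - I) (contract V E v I) k"
        unfolding k_def
      proof (rule less.hyps)
        show "card (V - I) < card V"
          using \<open>finite V\<close> \<open>I \<noteq> {}\<close> \<open>I \<subseteq> N\<close> \<open>N \<subseteq> V\<close>
          by (intro psubset_card_mono) auto
        show "graph (V - I) (contract V E v I)" using G by (rule graph_contract)
        show "K_minor_free (V - I) (contract V E v I) (Suc t)"
          using K_minor_free_contract[OF G \<open>v \<in> V\<close> _ free] \<open>I \<subseteq> N\<close> unfolding N_def .
      qed
      then show ?thesis
        using colourable_of_colourable_contract[OF G \<open>v \<in> V\<close> _ \<open>independent_set V E I\<close>]
          \<open>I \<subseteq> N\<close> \<open>card (N - I) + 1 < k\<close>
        unfolding k_def N_def by blast
    qed
  qed
qed

theorem lemma1:
  fixes t \<delta> \<alpha> :: nat and V :: "'a set" and E :: "'a \<Rightarrow> 'a \<Rightarrow> bool"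
  assumes "t \<ge> 2"
    and "\<And>(W :: nat set) F. graph W F \<Longrightarrow> W \<noteq> {} \<Longrightarrow> K_minor_free W F (t + 1)
           \<Longrightarrow> min_degree_le W F \<delta>"
    and "\<And>(W :: nat set) F. graph W F \<Longrightarrow> K_minor_free W F t \<Longrightarrow> card W = \<delta>
           \<Longrightarrow> \<exists>S. independent_set W F S \<and> card S = \<alpha>"
    and "graph V E" and "K_minor_free V E (t + 1)"
  shows "colourable V E (\<delta> - \<alpha> + 2)"
proof (rule K_minor_free_colourable)
  show "min_degree_le W F \<delta>"
    if "graph W F" "W \<noteq> {}" "K_minor_free W F (Suc t)" for W :: "'a set" and F
    using min_degree_le_of_nat_graphs[OF assms(2)] that by simp
  show "\<exists>I. independent_set N F I \<and> \<alpha> + card N \<le> card I + \<delta>"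
    if "graph N F" "K_minor_free N F t" "card N \<le> \<delta>" for N :: "'a set" and F
    using ex_large_independent_subset_of_nat_graphs[OF assms(1,3) that] .
  show "graph V E" "K_minor_free V E (Suc t)" using assms(4,5) by simp_all
qed

end
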